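(* Let $d,b\ge1$ with $M=2^b<d$, $\varepsilon>0$, and let $k\in\{1,\dots,M\}$. Let $A$ be a uniformly (Haar) distributed $d\times d$ orthogonal matrix. The normalization constant $r_k$, i.e. the value $r>0$ for which the $k$-closest encoding with codebook $(rAs_1,\dots,rAs_M)$ is unbiased, is $$r_k=\frac{ke^\varepsilon+M-k}{e^\varepsilon-1}\sqrt{\frac{M-1}{M}}\,\frac{1}{C_k},$$ where $C_k=\mathbb{E}\big[\text{sum of the }k\text{ largest among }a_1,\dots,a_M\big]$ for $a=(a_1,\dots,a_d)$ uniformly distributed on $\mathbb{S}^{d-1}$.
   Context: $\mathbb{S}^{d-1}$ is the unit sphere in $\mathbb{R}^d$. The simplex vectors $s_1,\dots,s_M\in\mathbb{R}^d$ are $(s_i)_j=\frac{M-1}{\sqrt{M(M-1)}}$ if $j=i$, $(s_i)_j=-\frac{1}{\sqrt{M(M-1)}}$ if $j\ne i$, $j\le M$, and $(s_i)_j=0$ if $j>M$. For a shared random codebook $U^M=(U_1,\dots,U_M)$, the $k$-closest encoding of $v\in\mathbb{S}^{d-1}$ (integer $k$) outputs message $m\in\{1,\dots,M\}$ with probability $\frac{e^\varepsilon}{ke^\varepsilon+M-k}$ if $\|v-U_m\|^2$ is among the $k$ smallest of $\|v-U_1\|^2,\dots,\|v-U_M\|^2$ and $\frac{1}{ke^\varepsilon+M-k}$ otherwise; the server decodes $m$ as $U_m$. The scheme is unbiased if $\mathbb{E}[\sum_{m=1}^M U_m\Pr(m\mid v,U^M)]=v$ for all $v\in\mathbb{S}^{d-1}$.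 *)

theory Defs
  imports "HOL-Analysis.Analysis" "HOL-Probability.Probability"
begin

text \<open>Haar (uniform) probability distribution on the orthogonal group O(d), d = CARD('n):
  the Borel probability measure concentrated on orthogonal matrices that is invariant under
  left multiplication by every orthogonal matrix (this characterises Haar measure uniquely).\<close>
definition haar_orthogonal :: "(real^'n^'n) measure \<Rightarrow> bool" where
  "haar_orthogonal \<mu> \<longleftrightarrow>
     prob_space \<mu> \<and> sets \<mu> = sets borel \<and>
     emeasure \<mu> {A. orthogonal_matrix A} = 1 \<and>
     (\<forall>Q. orthogonal_matrix Q \<longrightarrow> distr \<mu> borel (\<lambda>A. Q ** A) = \<mu>)"

definition uniform_sphere :: "(real^'n) measure \<Rightarrow> bool" where
  "uniform_sphere \<nu> \<longleftrightarrow>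
     prob_space \<nu> \<and> sets \<nu> = sets borel \<and>
     emeasure \<nu> (sphere 0 1) = 1 \<and>
     (\<forall>Q. orthogonal_matrix Q \<longrightarrow> distr \<nu> borel (\<lambda>x. Q *v x) = \<nu>)"

text \<open>Simplex vectors s_0,...,s_{M-1} (0-indexed); the coordinates 1..M of the paper are the
  coordinates \<sigma> 0, ..., \<sigma> (M-1) of the index type.\<close>
definition simplex_vec :: "nat \<Rightarrow> (nat \<Rightarrow> 'n) \<Rightarrow> nat \<Rightarrow> real^'n" where
  "simplex_vec M \<sigma> i = (\<chi> j. if j \<in> \<sigma> ` {..<M} then
       (if j = \<sigma> i then (real M - 1) / sqrt (real M * (real M - 1))
        else - 1 / sqrt (real M * (real M - 1)))
     else 0)"

text \<open>Probability that the k-closest encoding of v with codebook U_0..U_{M-1} outputs m.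
  "Among the k smallest" = fewer than k codewords are strictly closer.\<close>
definition kclosest_prob ::
  "real \<Rightarrow> nat \<Rightarrow> nat \<Rightarrow> (nat \<Rightarrow> real^'n) \<Rightarrow> real^'n \<Rightarrow> nat \<Rightarrow> real" where
  "kclosest_prob \<epsilon> k M U v m =
     (if card {j\<in>{..<M}. (norm (v - U j))\<^sup>2 < (norm (v - U m))\<^sup>2} < k
      then exp \<epsilon> / (real k * exp \<epsilon> + real M - real k)
      else 1 / (real k * exp \<epsilon> + real M - real k))"

definition kclosest_unbiased ::
  "real \<Rightarrow> nat \<Rightarrow> nat \<Rightarrow> 'a measure \<Rightarrow> ('a \<Rightarrow> nat \<Rightarrow> real^'n) \<Rightarrow> bool" where
  "kclosest_unbiased \<epsilon> k M \<mu> U \<longleftrightarrow>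
     (\<forall>v::real^'n. norm v = 1 \<longrightarrow>
        integral\<^sup>L \<mu> (\<lambda>A. \<Sum>m<M. kclosest_prob \<epsilon> k M (U A) v m *\<^sub>R U A m) = v)"

definition topk_sum :: "nat \<Rightarrow> nat \<Rightarrow> (nat \<Rightarrow> real) \<Rightarrow> real" where
  "topk_sum k M f = Max {sum f S | S. S \<subseteq> {..<M} \<and> card S = k}"

end

theory Submission
  imports Defs
begin

text \<open>
  Fix \<open>r > 0\<close> and a unit vector \<open>v\<close>. The k-closest estimate is equivariant under orthogonal maps,
  so by left invariance of the Haar measure its expectation \<open>E\<close> is fixed by every orthogonal map
  fixing \<open>v\<close>; the reflection in a unit vector \<open>u \<bottom> v\<close> shows \<open>\<langle>u, E\<rangle> = 0\<close>, hence \<open>E\<close> is a multiple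
  of \<open>v\<close> and the scheme is unbiased iff \<open>\<langle>v, E\<rangle> = 1\<close>.

  Since \<open>\<parallel>v - r A s\<^sub>j\<parallel>\<^sup>2 = 1 + r\<^sup>2 - 2r\<langle>vA, s\<^sub>j\<rangle>\<close> and \<open>\<langle>w, s\<^sub>j\<rangle>\<close> is an increasing affine function
  of \<open>w\<^sub>\<sigma>\<^sub>j\<close>, the k closest codewords are indexed by the k largest coordinates of the row
  \<open>w = vA\<close>, and then \<open>\<langle>v, estimate\<rangle>\<close> is an explicit affine function of the top-k sum of these
  coordinates and of their total sum. A Fubini argument over Haar measure \<times> sphere measure shows
  that \<open>vA\<close> may be replaced by a uniform point of the sphere; there ties have probability zero
  (tilted copies of a coordinate hyperplane are disjoint up to a null set and have equal measure)
  and coordinates have mean zero, which leaves \<open>\<langle>v, E\<rangle> = r (e\<^sup>\<epsilon> - 1) C\<^sub>k / (D \<surd>((M-1)/M))\<close>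
  with \<open>D = k e\<^sup>\<epsilon> + M - k\<close>.
\<close>

section \<open>Orthogonal matrices\<close>

lemma orthogonal_transformation_obtains_matrix:
  fixes f :: "real^'n \<Rightarrow> real^'n"
  assumes "orthogonal_transformation f"
  obtains Q where "orthogonal_matrix Q" "\<And>x. Q *v x = f x"
proof
  show "orthogonal_matrix (matrix f)"
    using assms orthogonal_transformation_matrix by blast
  have "Vector_Spaces.linear (*s) (*s) f"
    using assms by (simp add: orthogonal_transformation_def linear_def scalar_mult_eq_scaleR)
  then show "matrix f *v x = f x" for x
    by (simp add: matrix_works)
qed

lemma orthogonal_matrix_norm:
  fixes Q :: "real^'n^'n"
  assumes "orthogonal_matrix Q"
  shows "norm (Q *v x) = norm x"
proof -
  have "orthogonal_transformation (\<lambda>x. Q *v x)"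
    using assms by (simp add: orthogonal_transformation_matrix)
  then show ?thesis
    by (rule orthogonal_transformation_norm)
qed

lemma orthogonal_matrix_transpose_mul_cancel:
  fixes Q :: "real^'n^'n"
  assumes "orthogonal_matrix Q"
  shows "transpose Q *v (Q *v x) = x"
  using assms by (simp add: orthogonal_matrix matrix_vector_mul_assoc)

lemma orthogonal_matrix_obtains_map_to:
  fixes x v :: "real^'n"
  assumes "norm x = 1" "norm v = 1"
  obtains Q :: "real^'n^'n" where "orthogonal_matrix Q" "Q *v x = v"
proof -
  obtain f where "orthogonal_transformation f" "f x = v"
    using orthogonal_transformation_exists_1[OF assms] by blast
  then show ?thesis
    using that by (metis orthogonal_transformation_obtains_matrix)
qed

lemma orthogonal_transformation_reflection:
  fixes u :: "'a::real_inner"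
  assumes "norm u = 1"
  shows "orthogonal_transformation (\<lambda>x. x - (2 * inner u x) *\<^sub>R u)"
proof -
  have "inner u u = 1"
    using assms by (simp add: norm_eq_1)
  then show ?thesis
    unfolding orthogonal_transformation_def
    by (auto intro!: linearI simp: inner_add_right inner_diff_left inner_diff_right
        inner_commute algebra_simps scaleR_add_left)
qed

lemma orthogonal_transformation_plane_rotation:
  fixes a l :: "'n::finite"
  assumes "a \<noteq> l" and "c\<^sup>2 + s\<^sup>2 = 1"
  shows "orthogonal_transformation (\<lambda>w::real^'n.
    \<chi> i. if i = a then c * w$a - s * w$l else if i = l then s * w$a + c * w$l else w$i)"
    (is "orthogonal_transformation ?f")
proof -
  have split: "(\<Sum>i\<in>UNIV. g i) = g a + g l + (\<Sum>i\<in>UNIV - {a, l}. g i)" for g :: "'n \<Rightarrow> real"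
    using assms(1) by (simp add: sum.remove[of UNIV a] sum.remove[of "UNIV - {a}" l] Diff_insert2[symmetric] insert_commute)
  have "inner (?f w) (?f v) = inner w v" for w v
  proof -
    have "inner (?f w) (?f v)
        = ?f w $ a * ?f v $ a + ?f w $ l * ?f v $ l + (\<Sum>i\<in>UNIV - {a, l}. ?f w $ i * ?f v $ i)"
      by (simp only: inner_vec_def inner_real_def split)
    also have "\<dots> = (c\<^sup>2 + s\<^sup>2) * (w$a * v$a + w$l * v$l) + (\<Sum>i\<in>UNIV - {a, l}. w $ i * v $ i)"
      using assms(1) by (simp add: power2_eq_square algebra_simps)
    also have "\<dots> = inner w v"
      using assms(2) by (simp only: inner_vec_def inner_real_def split) simp
    finally show ?thesis .
  qed
  then show ?thesis
    unfolding orthogonal_transformation_def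
    by (auto intro!: linearI simp: vec_eq_iff algebra_simps)
qed

lemma norm_diff_scaled_unit_squared:
  fixes v u :: "'a::real_inner"
  assumes "norm v = 1" "norm u = 1"
  shows "(norm (v - r *\<^sub>R u))\<^sup>2 = 1 + r\<^sup>2 - 2 * r * inner v u"
proof -
  have "inner v v = 1" "inner u u = 1"
    using assms by (simp_all add: norm_eq_1)
  then have "inner (v - r *\<^sub>R u) (v - r *\<^sub>R u) = 1 + r\<^sup>2 - 2 * r * inner v u"
    by (simp add: inner_diff_left inner_diff_right inner_commute power2_eq_square algebra_simps)
  then show ?thesis
    by (simp add: power2_norm_eq_inner)
qed

lemma eq_scaleR_if_orthogonal_inner_zero:
  fixes v x :: "'a::real_inner"
  assumes "norm v = 1" and orth: "\<And>u. norm u = 1 \<Longrightarrow> inner u v = 0 \<Longrightarrow> inner u x = 0"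
  shows "x = inner v x *\<^sub>R v"
proof (rule ccontr)
  define y where "y = x - inner v x *\<^sub>R v"
  assume "x \<noteq> inner v x *\<^sub>R v"
  then have "y \<noteq> 0"
    unfolding y_def by simp
  have "inner v v = 1"
    using assms(1) by (simp add: norm_eq_1)
  then have "inner y v = 0"
    unfolding y_def by (simp add: inner_diff_left inner_commute[of x v])
  then have "inner (y /\<^sub>R norm y) x = 0"
    using \<open>y \<noteq> 0\<close> by (intro orth) auto
  then have "inner y x = 0"
    using \<open>y \<noteq> 0\<close> by simp
  then have "inner y y = 0"
    using \<open>inner y v = 0\<close> unfolding y_def by (simp add: inner_diff_right)
  then show False
    using \<open>y \<noteq> 0\<close> by simp
qed

lemma scaleR_eq_self_on_sphere_iff:
  "(\<forall>v::'a::euclidean_space. norm v = 1 \<longrightarrow> c *\<^sub>R v = v) \<longleftrightarrow> c = 1"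
proof
  obtain b :: 'a where "b \<in> Basis"
    using nonempty_Basis by blast
  then have "norm b = 1" "b \<noteq> 0"
    by (auto simp: nonzero_Basis)
  then show "c = 1" if "\<forall>v::'a. norm v = 1 \<longrightarrow> c *\<^sub>R v = v"
    using that scaleR_cancel_right[of c b 1] by simp
qed simp

section \<open>Simplex vectors\<close>

lemma simplex_vec_nth:
  assumes "inj_on \<sigma> {..<M}" "i < M" "l < M"
  shows "simplex_vec M \<sigma> i $ \<sigma> l = (if l = i then real M - 1 else - 1) / sqrt (real M * (real M - 1))"
  using assms unfolding simplex_vec_def by (auto dest: inj_onD)

lemma inner_simplex_vec:
  fixes w :: "real^'n"
  assumes inj: "inj_on \<sigma> {..<M}" and "i < M"
  shows "inner w (simplex_vec M \<sigma> i) = (real M * w $ \<sigma> i - (\<Sum>l<M. w $ \<sigma> l)) / sqrt (real M * (real M - 1))"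
proof -
  define q where "q = sqrt (real M * (real M - 1))"
  have "inner w (simplex_vec M \<sigma> i) = (\<Sum>j\<in>\<sigma> ` {..<M}. w $ j * simplex_vec M \<sigma> i $ j)"
    unfolding inner_vec_def inner_real_def
    by (rule sum.mono_neutral_right) (auto simp: simplex_vec_def)
  also have "\<dots> = (\<Sum>l<M. w $ \<sigma> l * simplex_vec M \<sigma> i $ \<sigma> l)"
    using inj by (simp add: sum.reindex)
  also have "\<dots> = (\<Sum>l<M. (if l = i then real M * w $ \<sigma> i else 0) - w $ \<sigma> l) / q"
    unfolding sum_divide_distrib
    by (intro sum.cong refl) (auto simp: simplex_vec_nth[OF inj \<open>i < M\<close>] q_def field_simps)
  also have "\<dots> = (real M * w $ \<sigma> i - (\<Sum>l<M. w $ \<sigma> l)) / q"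
    using \<open>i < M\<close> by (simp add: sum_subtractf)
  finally show ?thesis
    unfolding q_def .
qed

lemma norm_simplex_vec:
  assumes inj: "inj_on \<sigma> {..<M}" and "i < M" "2 \<le> M"
  shows "norm (simplex_vec M \<sigma> i) = 1"
proof -
  define q where "q = sqrt (real M * (real M - 1))"
  have "q * q = real M * (real M - 1)" "q > 0"
    unfolding q_def using \<open>2 \<le> M\<close> by simp_all
  have "(\<Sum>l<M. simplex_vec M \<sigma> i $ \<sigma> l) = (\<Sum>l<M. (if l = i then real M else 0) - 1) / q"
    unfolding sum_divide_distrib
    by (intro sum.cong refl) (auto simp: simplex_vec_nth[OF inj \<open>i < M\<close>] q_def diff_divide_distrib)
  also have "\<dots> = 0"
    using \<open>i < M\<close> by (simp add: sum_subtractf)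
  finally have "inner (simplex_vec M \<sigma> i) (simplex_vec M \<sigma> i) = real M * ((real M - 1) / q) / q"
    using inner_simplex_vec[OF inj \<open>i < M\<close>] simplex_vec_nth[OF inj \<open>i < M\<close> \<open>i < M\<close>]
    by (simp add: q_def)
  also have "\<dots> = 1"
    using \<open>q * q = _\<close> \<open>q > 0\<close> by (simp add: field_simps)
  finally show ?thesis
    by (simp add: norm_eq_sqrt_inner)
qed

lemma sqrt_mult_pred_eq:
  assumes "0 < M"
  shows "sqrt (real M * (real M - 1)) = real M * sqrt ((real M - 1) / real M)"
proof -
  have "real M * (real M - 1) = (real M)\<^sup>2 * ((real M - 1) / real M)"
    using assms by (simp add: power2_eq_square)
  then have "sqrt (real M * (real M - 1)) = sqrt ((real M)\<^sup>2) * sqrt ((real M - 1) / real M)"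
    by (simp only: real_sqrt_mult)
  then show ?thesis
    by simp
qed

section \<open>Ranks and top-k sums\<close>

definition num_greater :: "nat \<Rightarrow> (nat \<Rightarrow> real) \<Rightarrow> nat \<Rightarrow> nat" where
  "num_greater M f m = card {j \<in> {..<M}. f m < f j}"

definition top_ranked :: "nat \<Rightarrow> nat \<Rightarrow> (nat \<Rightarrow> real) \<Rightarrow> nat set" where
  "top_ranked k M f = {m \<in> {..<M}. num_greater M f m < k}"

lemma top_ranked_subset: "top_ranked k M f \<subseteq> {..<M}"
  unfolding top_ranked_def by auto

lemma top_ranked_cong:
  assumes "\<And>i j. i < M \<Longrightarrow> j < M \<Longrightarrow> f i < f j \<longleftrightarrow> g i < g j"
  shows "top_ranked k M f = top_ranked k M g"
proof -
  have "num_greater M f m = num_greater M g m" if "m < M" for m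
    unfolding num_greater_def using assms that by (simp cong: conj_cong)
  then show ?thesis
    unfolding top_ranked_def by (intro Collect_cong) auto
qed

lemma num_greater_less:
  assumes "m' < M" "f m < f m'"
  shows "num_greater M f m' < num_greater M f m"
proof -
  have "{j \<in> {..<M}. f m' < f j} \<subset> {j \<in> {..<M}. f m < f j}"
    using assms by auto
  then show ?thesis
    unfolding num_greater_def by (intro psubset_card_mono) auto
qed

lemma bij_betw_num_greater:
  assumes inj: "inj_on f {..<M}"
  shows "bij_betw (num_greater M f) {..<M} {..<M}"
proof -
  have "num_greater M f m < M" if "m < M" for m
  proof -
    have "{j \<in> {..<M}. f m < f j} \<subseteq> {..<M} - {m}"
      by auto
    then have "num_greater M f m \<le> card ({..<M} - {m})"
      unfolding num_greater_def by (intro card_mono) auto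
    then show ?thesis
      using that by simp
  qed
  then have image: "num_greater M f ` {..<M} \<subseteq> {..<M}"
    by auto
  have "inj_on (num_greater M f) {..<M}"
  proof (rule inj_onI)
    fix m m' assume m: "m \<in> {..<M}" "m' \<in> {..<M}" and "num_greater M f m = num_greater M f m'"
    then have "\<not> f m < f m'" "\<not> f m' < f m"
      using num_greater_less[of m' M f m] num_greater_less[of m M f m'] by auto
    then have "f m = f m'"
      by linarith
    then show "m = m'"
      using inj_onD[OF inj _ m] by blast
  qed
  then show ?thesis
    using endo_inj_surj[OF finite_lessThan image] by (simp add: bij_betw_def)
qed

lemma card_top_ranked:
  assumes "inj_on f {..<M}" "k \<le> M"
  shows "card (top_ranked k M f) = k"
proof -
  have num_greater: "inj_on (num_greater M f) {..<M}" "num_greater M f ` {..<M} = {..<M}"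
    using bij_betw_num_greater[OF assms(1)] by (auto simp: bij_betw_def)
  have "num_greater M f ` top_ranked k M f = {..<k}"
  proof
    show "num_greater M f ` top_ranked k M f \<subseteq> {..<k}"
      unfolding top_ranked_def by auto
    show "{..<k} \<subseteq> num_greater M f ` top_ranked k M f"
    proof
      fix i assume "i \<in> {..<k}"
      then have "i \<in> num_greater M f ` {..<M}"
        using num_greater(2) assms(2) by simp
      then obtain m where "m < M" "num_greater M f m = i"
        by blast
      then show "i \<in> num_greater M f ` top_ranked k M f"
        using \<open>i \<in> {..<k}\<close> unfolding top_ranked_def by force
    qed
  qed
  moreover have "inj_on (num_greater M f) (top_ranked k M f)"
    using num_greater(1) top_ranked_subset by (rule inj_on_subset)
  ultimately show ?thesis
    using card_image[of "num_greater M f" "top_ranked k M f"] by simp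
qed

lemma top_ranked_above:
  assumes "m \<in> top_ranked k M f" "m' < M" "m' \<notin> top_ranked k M f"
  shows "f m' < f m"
proof (rule ccontr)
  assume "\<not> f m' < f m"
  then have "{j \<in> {..<M}. f m' < f j} \<subseteq> {j \<in> {..<M}. f m < f j}"
    by auto
  then have "num_greater M f m' \<le> num_greater M f m"
    unfolding num_greater_def by (intro card_mono) auto
  also have "\<dots> < k"
    using assms(1) unfolding top_ranked_def by simp
  finally show False
    using assms(2,3) unfolding top_ranked_def by simp
qed

text \<open>Exchange argument: every index of \<open>S\<close> outside the top set has a smaller value than every
  index of the top set outside \<open>S\<close>, and both differences have the same size.\<close>
lemma sum_le_sum_top_ranked:
  assumes "inj_on f {..<M}" "k \<le> M" "S \<subseteq> {..<M}" "card S = k"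
  shows "sum f S \<le> sum f (top_ranked k M f)"
proof -
  let ?T = "top_ranked k M f"
  have fin: "finite S" "finite ?T"
    using assms(3) top_ranked_subset[of k M f] by (auto intro: finite_subset)
  have card_eq: "card (S - ?T) = card (?T - S)"
    using card_top_ranked[OF assms(1,2)] assms(4) fin
    by (simp add: card_Diff_subset_Int Int_commute)
  have split: "sum f S = sum f (S \<inter> ?T) + sum f (S - ?T)" "sum f ?T = sum f (S \<inter> ?T) + sum f (?T - S)"
    using sum.Int_Diff[OF fin(1), of f ?T] sum.Int_Diff[OF fin(2), of f S] by (simp_all add: Int_commute)
  show ?thesis
  proof (cases "?T - S = {}")
    case True
    then have "card (S - ?T) = 0"
      using card_eq by (simp only: card.empty)
    then have "S - ?T = {}"
      using fin by simp
    then show ?thesis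
      using split True by simp
  next
    case False
    define t where "t = Min (f ` (?T - S))"
    have "t \<le> f y" if "y \<in> ?T - S" for y
      unfolding t_def using fin that by auto
    moreover have "f x \<le> t" if "x \<in> S - ?T" for x
    proof -
      have "t \<in> f ` (?T - S)"
        unfolding t_def using fin False by (intro Min_in) auto
      then show ?thesis
        using top_ranked_above[of _ k M f x] that assms(3) by fastforce
    qed
    ultimately have "sum f (S - ?T) \<le> sum f (?T - S)"
      using card_eq sum_bounded_above[of "S - ?T" f t] sum_bounded_below[of "?T - S" t f] by simp
    then show ?thesis
      using split by simp
  qed
qed

lemma topk_sum_eq_sum_top_ranked:
  assumes "inj_on f {..<M}" "k \<le> M"
  shows "topk_sum k M f = sum f (top_ranked k M f)"
  unfolding topk_sum_def
proof (rule Max_eqI)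
  show "finite {sum f S |S. S \<subseteq> {..<M} \<and> card S = k}"
    by (rule finite_subset[of _ "sum f ` Pow {..<M}"]) auto
  show "y \<le> sum f (top_ranked k M f)" if "y \<in> {sum f S |S. S \<subseteq> {..<M} \<and> card S = k}" for y
    using that sum_le_sum_top_ranked[OF assms] by auto
  show "sum f (top_ranked k M f) \<in> {sum f S |S. S \<subseteq> {..<M} \<and> card S = k}"
    using top_ranked_subset[of k M f] card_top_ranked[OF assms] by auto
qed

section \<open>The k-closest estimate\<close>

definition kclosest_estimate :: "real \<Rightarrow> nat \<Rightarrow> nat \<Rightarrow> (nat \<Rightarrow> real^'n) \<Rightarrow> real^'n \<Rightarrow> real^'n" where
  "kclosest_estimate \<epsilon> k M U v = (\<Sum>m<M. kclosest_prob \<epsilon> k M U v m *\<^sub>R U m)"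

lemma kclosest_unbiased_iff:
  "kclosest_unbiased \<epsilon> k M \<mu> U \<longleftrightarrow>
     (\<forall>v. norm v = 1 \<longrightarrow> (\<integral>A. kclosest_estimate \<epsilon> k M (U A) v \<partial>\<mu>) = v)"
  unfolding kclosest_unbiased_def kclosest_estimate_def ..

lemma kclosest_prob_orthogonal:
  fixes Q :: "real^'n^'n"
  assumes "orthogonal_matrix Q"
  shows "kclosest_prob \<epsilon> k M (\<lambda>j. Q *v U j) (Q *v v) m = kclosest_prob \<epsilon> k M U v m"
proof -
  have "norm (Q *v v - Q *v U j) = norm (v - U j)" for j
    using orthogonal_matrix_norm[OF assms, of "v - U j"] by (simp add: matrix_vector_mult_diff_distrib)
  then show ?thesis
    unfolding kclosest_prob_def by simp
qed

lemma kclosest_estimate_orthogonal: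
  fixes Q :: "real^'n^'n"
  assumes "orthogonal_matrix Q"
  shows "kclosest_estimate \<epsilon> k M (\<lambda>j. Q *v U j) (Q *v v) = Q *v kclosest_estimate \<epsilon> k M U v"
  unfolding kclosest_estimate_def kclosest_prob_orthogonal[OF assms]
  by (simp add: linear_sum[OF matrix_vector_mul_linear] matrix_vector_mult_scaleR)

definition kclosest_weight :: "real \<Rightarrow> nat \<Rightarrow> nat \<Rightarrow> bool \<Rightarrow> real" where
  "kclosest_weight \<epsilon> k M is_top = (if is_top then exp \<epsilon> else 1) / (real k * exp \<epsilon> + real M - real k)"

lemma exp_le_kclosest_normalizer:
  assumes "0 \<le> \<epsilon>" "1 \<le> k" "k \<le> M"
  shows "exp \<epsilon> \<le> real k * exp \<epsilon> + real M - real k"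
proof -
  have "exp \<epsilon> \<le> real k * exp \<epsilon>" "real k \<le> real M"
    using assms by simp_all
  then show ?thesis
    by linarith
qed

lemma kclosest_weight_bounds:
  assumes "0 \<le> \<epsilon>" "1 \<le> k" "k \<le> M"
  shows "0 \<le> kclosest_weight \<epsilon> k M is_top" "kclosest_weight \<epsilon> k M is_top \<le> 1"
proof -
  have "1 \<le> exp \<epsilon>" "exp \<epsilon> \<le> real k * exp \<epsilon> + real M - real k"
    using assms(1) exp_le_kclosest_normalizer[OF assms] by simp_all
  moreover from this have "1 \<le> real k * exp \<epsilon> + real M - real k"
    by linarith
  ultimately have "0 < (if is_top then exp \<epsilon> else 1)"
    "(if is_top then exp \<epsilon> else 1) \<le> real k * exp \<epsilon> + real M - real k"
    by simp_all
  then show "0 \<le> kclosest_weight \<epsilon> k M is_top" "kclosest_weight \<epsilon> k M is_top \<le> 1"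
    unfolding kclosest_weight_def by simp_all
qed

lemma kclosest_prob_eq_weight:
  assumes "m < M"
  shows "kclosest_prob \<epsilon> k M U v m = kclosest_weight \<epsilon> k M (m \<in> top_ranked k M (\<lambda>j. - (norm (v - U j))\<^sup>2))"
  using assms unfolding kclosest_prob_def kclosest_weight_def top_ranked_def num_greater_def by simp

lemma kclosest_estimate_eq_weights:
  "kclosest_estimate \<epsilon> k M U v =
     (\<Sum>m<M. kclosest_weight \<epsilon> k M (m \<in> top_ranked k M (\<lambda>j. - (norm (v - U j))\<^sup>2)) *\<^sub>R U m)"
  unfolding kclosest_estimate_def by (intro sum.cong refl) (simp add: kclosest_prob_eq_weight)

lemma norm_kclosest_estimate_le:
  assumes "0 \<le> \<epsilon>" "1 \<le> k" "k \<le> M" "\<And>m. m < M \<Longrightarrow> norm (U m) \<le> B"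
  shows "norm (kclosest_estimate \<epsilon> k M U v) \<le> real M * B"
proof -
  have "norm (kclosest_prob \<epsilon> k M U v m *\<^sub>R U m) \<le> B" if "m < M" for m
  proof -
    have "0 \<le> kclosest_prob \<epsilon> k M U v m" "kclosest_prob \<epsilon> k M U v m \<le> 1"
      unfolding kclosest_prob_eq_weight[OF that] by (simp_all add: kclosest_weight_bounds[OF assms(1-3)])
    then have "\<bar>kclosest_prob \<epsilon> k M U v m\<bar> \<le> 1"
      by simp
    then have "\<bar>kclosest_prob \<epsilon> k M U v m\<bar> * norm (U m) \<le> norm (U m)"
      by (simp add: mult_left_le_one_le)
    then show ?thesis
      using assms(4)[OF that] by simp
  qed
  then have "(\<Sum>m<M. norm (kclosest_prob \<epsilon> k M U v m *\<^sub>R U m)) \<le> of_nat (card {..<M}) * B"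
    by (intro sum_bounded_above) simp
  then show ?thesis
    unfolding kclosest_estimate_def by (simp add: order_trans[OF norm_sum])
qed

lemma top_ranked_simplex_codebook:
  fixes A :: "real^'n^'n"
  assumes A: "orthogonal_matrix A" and v: "norm v = 1" and "0 < r"
    and inj: "inj_on \<sigma> {..<M}" and M: "2 \<le> M"
  shows "top_ranked k M (\<lambda>j. - (norm (v - r *\<^sub>R (A *v simplex_vec M \<sigma> j)))\<^sup>2)
       = top_ranked k M (\<lambda>j. (v v* A) $ \<sigma> j)"
proof (rule top_ranked_cong)
  define w where "w = v v* A"
  define q where "q = sqrt (real M * (real M - 1))"
  have "0 < q"
    unfolding q_def using M by simp
  define c where "c = 2 * r * real M / q"
  define K where "K = 1 + r\<^sup>2 + 2 * r * (\<Sum>l<M. w $ \<sigma> l) / q"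
  have dist: "- (norm (v - r *\<^sub>R (A *v simplex_vec M \<sigma> j)))\<^sup>2
      = c * w $ \<sigma> j - K" if "j < M" for j
  proof -
    have "norm (A *v simplex_vec M \<sigma> j) = 1"
      using orthogonal_matrix_norm[OF A] norm_simplex_vec[OF inj that M] by simp
    then have "(norm (v - r *\<^sub>R (A *v simplex_vec M \<sigma> j)))\<^sup>2 = 1 + r\<^sup>2 - 2 * r * inner w (simplex_vec M \<sigma> j)"
      using norm_diff_scaled_unit_squared[OF v] unfolding w_def by (simp add: dot_lmul_matrix)
    then show ?thesis
      using \<open>0 < q\<close> unfolding inner_simplex_vec[OF inj that] q_def[symmetric] c_def K_def
      by (simp add: field_simps)
  qed
  fix i j assume "i < M" "j < M"
  have "0 < c"
    unfolding c_def using \<open>0 < r\<close> \<open>0 < q\<close> M by simp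
  then show "- (norm (v - r *\<^sub>R (A *v simplex_vec M \<sigma> i)))\<^sup>2 < - (norm (v - r *\<^sub>R (A *v simplex_vec M \<sigma> j)))\<^sup>2
      \<longleftrightarrow> (v v* A) $ \<sigma> i < (v v* A) $ \<sigma> j"
    unfolding dist[OF \<open>i < M\<close>] dist[OF \<open>j < M\<close>] w_def by simp
qed

definition kclosest_projection :: "real \<Rightarrow> nat \<Rightarrow> nat \<Rightarrow> (nat \<Rightarrow> 'n) \<Rightarrow> real^'n \<Rightarrow> real" where
  "kclosest_projection \<epsilon> k M \<sigma> w =
     (\<Sum>m<M. kclosest_weight \<epsilon> k M (m \<in> top_ranked k M (\<lambda>j. w $ \<sigma> j)) * inner w (simplex_vec M \<sigma> m))"

lemma inner_kclosest_estimate_simplex: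
  fixes A :: "real^'n^'n"
  assumes "orthogonal_matrix A" "norm v = 1" "0 < r" "inj_on \<sigma> {..<M}" "2 \<le> M"
  shows "inner v (kclosest_estimate \<epsilon> k M (\<lambda>j. r *\<^sub>R (A *v simplex_vec M \<sigma> j)) v)
       = r * kclosest_projection \<epsilon> k M \<sigma> (v v* A)"
  unfolding kclosest_estimate_eq_weights top_ranked_simplex_codebook[OF assms] kclosest_projection_def
  by (simp add: inner_sum_right sum_distrib_left dot_lmul_matrix[symmetric] algebra_simps)

lemma kclosest_projection_eq:
  fixes w :: "real^'n"
  assumes inj: "inj_on \<sigma> {..<M}" and inj_w: "inj_on (\<lambda>j. w $ \<sigma> j) {..<M}" and "k \<le> M"
  shows "kclosest_projection \<epsilon> k M \<sigma> w =
    (exp \<epsilon> - 1) / ((real k * exp \<epsilon> + real M - real k) * sqrt (real M * (real M - 1)))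
      * (real M * topk_sum k M (\<lambda>j. w $ \<sigma> j) - real k * (\<Sum>l<M. w $ \<sigma> l))"
proof -
  define D where "D = real k * exp \<epsilon> + real M - real k"
  define q where "q = sqrt (real M * (real M - 1))"
  define T where "T = top_ranked k M (\<lambda>j. w $ \<sigma> j)"
  define S where "S = (\<Sum>l<M. w $ \<sigma> l)"
  define a where "a m = inner w (simplex_vec M \<sigma> m)" for m
  have a: "a m = (real M * w $ \<sigma> m - S) / q" if "m < M" for m
    unfolding a_def S_def q_def using inner_simplex_vec[OF inj that] .
  have "T \<subseteq> {..<M}"
    unfolding T_def by (rule top_ranked_subset)
  have "kclosest_projection \<epsilon> k M \<sigma> w = (\<Sum>m<M. a m / D + (if m \<in> T then (exp \<epsilon> - 1) / D * a m else 0))"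
    unfolding kclosest_projection_def kclosest_weight_def a_def[symmetric] T_def[symmetric] D_def[symmetric]
    by (intro sum.cong refl) (simp add: diff_divide_distrib algebra_simps)
  also have "\<dots> = (\<Sum>m<M. a m) / D + (exp \<epsilon> - 1) / D * (\<Sum>m\<in>T. a m)"
    using \<open>T \<subseteq> {..<M}\<close>
    by (simp add: sum.distrib sum_divide_distrib sum_distrib_left sum.If_cases Int_absorb1)
  also have "(\<Sum>m<M. a m) = 0"
    using a by (simp add: S_def sum_divide_distrib[symmetric] sum_subtractf sum_distrib_left)
  also have "(\<Sum>m\<in>T. a m) = (real M * (\<Sum>m\<in>T. w $ \<sigma> m) - real k * S) / q"
    using a \<open>T \<subseteq> {..<M}\<close> card_top_ranked[OF inj_w \<open>k \<le> M\<close>]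
    by (simp add: T_def subset_eq sum_divide_distrib[symmetric] sum_subtractf sum_distrib_left)
  finally show ?thesis
    unfolding topk_sum_eq_sum_top_ranked[OF inj_w \<open>k \<le> M\<close>] T_def[symmetric] D_def[symmetric]
      q_def[symmetric] S_def[symmetric]
    by simp
qed

lemma kclosest_projection_bound:
  fixes w :: "real^'n"
  assumes "inj_on \<sigma> {..<M}" "2 \<le> M" "0 \<le> \<epsilon>" "1 \<le> k" "k \<le> M" "norm w = 1"
  shows "\<bar>kclosest_projection \<epsilon> k M \<sigma> w\<bar> \<le> real M"
proof -
  have term_bound: "\<bar>kclosest_weight \<epsilon> k M t * inner w (simplex_vec M \<sigma> m)\<bar> \<le> 1" if "m < M" for m t
  proof -
    have "\<bar>inner w (simplex_vec M \<sigma> m)\<bar> \<le> 1"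
      using Cauchy_Schwarz_ineq2[of w "simplex_vec M \<sigma> m"] norm_simplex_vec[OF assms(1) that assms(2)] assms(6)
      by simp
    then show ?thesis
      using kclosest_weight_bounds[OF assms(3-5), of t] by (simp add: abs_mult mult_le_one)
  qed
  have "(\<Sum>m<M. \<bar>kclosest_weight \<epsilon> k M (m \<in> top_ranked k M (\<lambda>j. w $ \<sigma> j)) * inner w (simplex_vec M \<sigma> m)\<bar>)
      \<le> of_nat (card {..<M}) * 1"
    by (rule sum_bounded_above) (simp add: term_bound)
  then have "(\<Sum>m<M. \<bar>kclosest_weight \<epsilon> k M (m \<in> top_ranked k M (\<lambda>j. w $ \<sigma> j)) * inner w (simplex_vec M \<sigma> m)\<bar>) \<le> real M"
    by simp
  then show ?thesis
    unfolding kclosest_projection_def by (rule order_trans[OF sum_abs])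
qed

section \<open>Haar measure and the uniform measure on the sphere\<close>

lemma haar_orthogonalD:
  fixes \<mu> :: "(real^'n^'n) measure"
  assumes "haar_orthogonal \<mu>"
  shows "prob_space \<mu>" "sets \<mu> = sets borel" "space \<mu> = UNIV"
    "AE A in \<mu>. orthogonal_matrix A"
    "\<And>Q. orthogonal_matrix Q \<Longrightarrow> distr \<mu> borel (\<lambda>A. Q ** A) = \<mu>"
proof -
  show p: "prob_space \<mu>" "sets \<mu> = sets borel" "space \<mu> = UNIV"
    "\<And>Q. orthogonal_matrix Q \<Longrightarrow> distr \<mu> borel (\<lambda>A. Q ** A) = \<mu>"
    using assms unfolding haar_orthogonal_def by (auto dest: sets_eq_imp_space_eq)
  interpret prob_space \<mu> by fact
  have "prob {A. orthogonal_matrix A} = 1"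
    using assms unfolding haar_orthogonal_def by (simp add: emeasure_eq_measure)
  then show "AE A in \<mu>. orthogonal_matrix A"
    using AE_prob_1 by force
qed

lemma uniform_sphereD:
  fixes \<nu> :: "(real^'n) measure"
  assumes "uniform_sphere \<nu>"
  shows "prob_space \<nu>" "sets \<nu> = sets borel" "space \<nu> = UNIV"
    "AE w in \<nu>. norm w = 1"
    "\<And>Q. orthogonal_matrix Q \<Longrightarrow> distr \<nu> borel (\<lambda>w. Q *v w) = \<nu>"
proof -
  show p: "prob_space \<nu>" "sets \<nu> = sets borel" "space \<nu> = UNIV"
    "\<And>Q. orthogonal_matrix Q \<Longrightarrow> distr \<nu> borel (\<lambda>w. Q *v w) = \<nu>"
    using assms unfolding uniform_sphere_def by (auto dest: sets_eq_imp_space_eq)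
  interpret prob_space \<nu> by fact
  have "prob (sphere 0 1) = 1"
    using assms unfolding uniform_sphere_def by (simp add: emeasure_eq_measure)
  then show "AE w in \<nu>. norm w = 1"
    using AE_prob_1 by force
qed

lemma borel_measurable_matrix_vector_mul:
  fixes Q :: "real^'n^'m"
  shows "(\<lambda>x. Q *v x) \<in> borel_measurable borel"
  by (intro borel_measurable_continuous_onI matrix_vector_mult_linear_continuous_on)

lemma borel_measurable_matrix_vector_mul_left:
  fixes x :: "real^'n"
  shows "(\<lambda>A::real^'n^'m. A *v x) \<in> borel_measurable borel"
  unfolding matrix_vector_mult_def by (intro borel_measurable_continuous_onI continuous_intros)

lemma borel_measurable_vector_matrix_mul:
  fixes v :: "real^'m"
  shows "(\<lambda>A::real^'n^'m. v v* A) \<in> borel_measurable borel"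
  unfolding vector_matrix_mult_def by (intro borel_measurable_continuous_onI continuous_intros)

lemma integral_haar_orthogonal_left:
  fixes \<mu> :: "(real^'n^'n) measure" and f :: "real^'n^'n \<Rightarrow> 'b::{banach, second_countable_topology}"
  assumes "haar_orthogonal \<mu>" "orthogonal_matrix Q" "f \<in> borel_measurable borel"
  shows "(\<integral>A. f (Q ** A) \<partial>\<mu>) = integral\<^sup>L \<mu> f"
proof -
  note haar = haar_orthogonalD[OF assms(1)]
  have "(\<lambda>A. Q ** A) \<in> measurable \<mu> borel"
    unfolding measurable_cong_sets[OF haar(2) refl] matrix_matrix_mult_def
    by (intro borel_measurable_continuous_onI continuous_intros)
  then have "(\<integral>A. f (Q ** A) \<partial>\<mu>) = integral\<^sup>L (distr \<mu> borel (\<lambda>A. Q ** A)) f"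
    using assms(3) by (simp add: integral_distr)
  then show ?thesis
    using haar(5)[OF assms(2)] by simp
qed

lemma integral_uniform_sphere_orthogonal:
  fixes \<nu> :: "(real^'n) measure" and f :: "real^'n \<Rightarrow> 'b::{banach, second_countable_topology}"
  assumes "uniform_sphere \<nu>" "orthogonal_matrix Q" "f \<in> borel_measurable borel"
  shows "(\<integral>w. f (Q *v w) \<partial>\<nu>) = integral\<^sup>L \<nu> f"
proof -
  note sph = uniform_sphereD[OF assms(1)]
  have "(\<lambda>w. Q *v w) \<in> measurable \<nu> borel"
    unfolding measurable_cong_sets[OF sph(2) refl] by (rule borel_measurable_matrix_vector_mul)
  then have "(\<integral>w. f (Q *v w) \<partial>\<nu>) = integral\<^sup>L (distr \<nu> borel (\<lambda>w. Q *v w)) f"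
    using assms(3) by (simp add: integral_distr)
  then show ?thesis
    using sph(5)[OF assms(2)] by simp
qed

lemma measure_uniform_sphere_orthogonal:
  fixes \<nu> :: "(real^'n) measure"
  assumes "uniform_sphere \<nu>" "orthogonal_matrix Q" "B \<in> sets borel"
  shows "measure \<nu> {w. Q *v w \<in> B} = measure \<nu> B"
proof -
  note sph = uniform_sphereD[OF assms(1)]
  have "(\<lambda>w. Q *v w) \<in> measurable \<nu> borel"
    unfolding measurable_cong_sets[OF sph(2) refl] by (rule borel_measurable_matrix_vector_mul)
  then have "measure \<nu> {w. Q *v w \<in> B} = measure (distr \<nu> borel (\<lambda>w. Q *v w)) B"
    using assms(3) sph(3) by (simp add: measure_distr vimage_def)
  then show ?thesis
    using sph(5)[OF assms(2)] by simp
qed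

lemma integral_haar_row_eq:
  fixes \<mu> :: "(real^'n^'n) measure" and \<psi> :: "real^'n \<Rightarrow> real"
  assumes haar: "haar_orthogonal \<mu>" and \<psi>: "\<psi> \<in> borel_measurable borel"
    and x: "norm x = 1" and v: "norm v = 1"
  shows "(\<integral>A. \<psi> (x v* A) \<partial>\<mu>) = (\<integral>A. \<psi> (v v* A) \<partial>\<mu>)"
proof -
  obtain Q where Q: "orthogonal_matrix Q" "Q *v x = v"
    using orthogonal_matrix_obtains_map_to[OF x v] by blast
  then have "v v* Q = x"
    using orthogonal_matrix_transpose_mul_cancel[of Q x] by simp
  then have "(\<integral>A. \<psi> (v v* (Q ** A)) \<partial>\<mu>) = (\<integral>A. \<psi> (x v* A) \<partial>\<mu>)"
    by (simp add: vector_matrix_mul_assoc[symmetric])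
  moreover have "(\<lambda>A. \<psi> (v v* A)) \<in> borel_measurable borel"
    using borel_measurable_vector_matrix_mul \<psi> by (rule measurable_compose)
  ultimately show ?thesis
    using integral_haar_orthogonal_left[OF haar Q(1), of "\<lambda>A. \<psi> (v v* A)"] by simp
qed

text \<open>Fubini on \<open>\<mu> \<Otimes> \<nu>\<close> for \<open>(A, x) \<mapsto> \<psi> (xA)\<close>: integrating first over \<open>A\<close> gives a constant on the
  sphere, integrating first over \<open>x\<close> gives \<open>\<integral>\<psi> d\<nu>\<close> for every orthogonal \<open>A\<close>.\<close>
lemma integral_haar_row_bounded:
  fixes \<mu> :: "(real^'n^'n) measure" and \<nu> :: "(real^'n) measure" and \<psi> :: "real^'n \<Rightarrow> real"
  assumes haar: "haar_orthogonal \<mu>" and sph: "uniform_sphere \<nu>"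
    and \<psi>: "\<psi> \<in> borel_measurable borel" and bound: "\<And>w. \<bar>\<psi> w\<bar> \<le> B" and "norm v = 1"
  shows "(\<integral>A. \<psi> (v v* A) \<partial>\<mu>) = integral\<^sup>L \<nu> \<psi>"
proof -
  note \<mu> = haar_orthogonalD[OF haar]
  note \<nu> = uniform_sphereD[OF sph]
  interpret P: pair_prob_space \<mu> \<nu>
    using \<mu>(1) \<nu>(1) by (simp add: pair_prob_space_def pair_sigma_finite_def prob_space_imp_sigma_finite)
  have "(\<lambda>(A, x). x v* A) \<in> borel_measurable (borel :: ((real^'n^'n) \<times> (real^'n)) measure)"
    unfolding vector_matrix_mult_def case_prod_beta
    by (intro borel_measurable_continuous_onI continuous_intros)
  then have row_meas: "(\<lambda>(A, x). x v* A) \<in> borel_measurable (borel \<Otimes>\<^sub>M borel :: ((real^'n^'n) \<times> (real^'n)) measure)"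
    by (simp add: borel_prod)
  have f_meas: "(\<lambda>(A, x). \<psi> (x v* A)) \<in> borel_measurable (\<mu> \<Otimes>\<^sub>M \<nu>)"
    unfolding measurable_cong_sets[OF sets_pair_measure_cong[OF \<mu>(2) \<nu>(2)] refl]
    using measurable_compose[OF row_meas \<psi>] by (simp add: case_prod_beta)
  have f_meas': "(\<lambda>(x, A). \<psi> (x v* A)) \<in> borel_measurable (\<nu> \<Otimes>\<^sub>M \<mu>)"
    using f_meas measurable_pair_swap_iff[of "\<lambda>(x, A). \<psi> (x v* A)" \<nu> \<mu> borel] by simp
  have "integrable (\<mu> \<Otimes>\<^sub>M \<nu>) (\<lambda>(A, x). \<psi> (x v* A))"
    using f_meas bound by (intro P.P.integrable_const_bound[where B=B]) auto
  then have fubini: "(\<integral>x. (\<integral>A. \<psi> (x v* A) \<partial>\<mu>) \<partial>\<nu>) = (\<integral>A. (\<integral>x. \<psi> (x v* A) \<partial>\<nu>) \<partial>\<mu>)"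
    by (rule P.Fubini_integral)
  have "(\<integral>A. \<psi> (x v* A) \<partial>\<mu>) = (\<integral>A. \<psi> (v v* A) \<partial>\<mu>)" if "norm x = 1" for x
    by (rule integral_haar_row_eq[OF haar \<psi> that \<open>norm v = 1\<close>])
  then have "(\<integral>x. (\<integral>A. \<psi> (x v* A) \<partial>\<mu>) \<partial>\<nu>) = (\<integral>A. \<psi> (v v* A) \<partial>\<mu>)"
    using \<nu>(4) P.M2.prob_space
    by (subst integral_cong_AE[where g="\<lambda>_. \<integral>A. \<psi> (v v* A) \<partial>\<mu>"])
      (auto intro!: P.M1.borel_measurable_lebesgue_integral f_meas')
  moreover have "(\<integral>x. \<psi> (x v* A) \<partial>\<nu>) = integral\<^sup>L \<nu> \<psi>" if "orthogonal_matrix A" for A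
    using integral_uniform_sphere_orthogonal[OF sph _ \<psi>, of "transpose A"] that by simp
  then have "(\<integral>A. (\<integral>x. \<psi> (x v* A) \<partial>\<nu>) \<partial>\<mu>) = integral\<^sup>L \<nu> \<psi>"
    using \<mu>(4) P.M1.prob_space
    by (subst integral_cong_AE[where g="\<lambda>_. integral\<^sup>L \<nu> \<psi>"])
      (auto intro!: P.M2.borel_measurable_lebesgue_integral f_meas)
  ultimately show ?thesis
    using fubini by simp
qed

lemma integral_haar_row:
  fixes \<mu> :: "(real^'n^'n) measure" and \<nu> :: "(real^'n) measure" and \<psi> :: "real^'n \<Rightarrow> real"
  assumes haar: "haar_orthogonal \<mu>" and sph: "uniform_sphere \<nu>"
    and \<psi>: "\<psi> \<in> borel_measurable borel" and bound: "\<And>w. norm w = 1 \<Longrightarrow> \<bar>\<psi> w\<bar> \<le> B"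
    and v: "norm v = 1"
  shows "(\<integral>A. \<psi> (v v* A) \<partial>\<mu>) = integral\<^sup>L \<nu> \<psi>"
proof -
  note \<mu> = haar_orthogonalD[OF haar]
  note \<nu> = uniform_sphereD[OF sph]
  define \<psi>' where "\<psi>' w = (if norm w = 1 then \<psi> w else 0)" for w :: "real^'n"
  have \<psi>'_meas: "\<psi>' \<in> borel_measurable borel"
    unfolding \<psi>'_def using \<psi> by measurable
  have "0 \<le> B"
    using bound[OF v] by linarith
  then have "\<bar>\<psi>' w\<bar> \<le> B" for w
    unfolding \<psi>'_def using bound by simp
  then have "(\<integral>A. \<psi>' (v v* A) \<partial>\<mu>) = integral\<^sup>L \<nu> \<psi>'"
    by (rule integral_haar_row_bounded[OF haar sph \<psi>'_meas _ v])
  moreover have "(\<integral>A. \<psi> (v v* A) \<partial>\<mu>) = (\<integral>A. \<psi>' (v v* A) \<partial>\<mu>)"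
  proof (rule integral_cong_AE)
    show "(\<lambda>A. \<psi> (v v* A)) \<in> borel_measurable \<mu>" "(\<lambda>A. \<psi>' (v v* A)) \<in> borel_measurable \<mu>"
      unfolding measurable_cong_sets[OF \<mu>(2) refl]
      using borel_measurable_vector_matrix_mul \<psi> \<psi>'_meas by (auto intro: measurable_compose)
    have unit: "norm (v v* A) = 1" if "orthogonal_matrix A" for A
      using orthogonal_matrix_norm[of "transpose A" v] that v by simp
    show "AE A in \<mu>. \<psi> (v v* A) = \<psi>' (v v* A)"
      using \<mu>(4) by eventually_elim (simp add: \<psi>'_def unit)
  qed
  moreover have "integral\<^sup>L \<nu> \<psi>' = integral\<^sup>L \<nu> \<psi>"
  proof (rule integral_cong_AE)
    show "\<psi>' \<in> borel_measurable \<nu>" "\<psi> \<in> borel_measurable \<nu>"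
      unfolding measurable_cong_sets[OF \<nu>(2) refl] using \<psi> \<psi>'_meas by auto
    show "AE w in \<nu>. \<psi>' w = \<psi> w"
      using \<nu>(4) by eventually_elim (simp add: \<psi>'_def)
  qed
  ultimately show ?thesis
    by simp
qed

section \<open>Ties and coordinates on the sphere\<close>

lemma disjoint_family_const_measure_eq_0:
  assumes "finite_measure N" "\<And>t::nat. Y t \<in> sets N" "disjoint_family Y"
    "\<And>t. measure N (Y t) = c"
  shows "c = 0"
proof -
  interpret finite_measure N by fact
  have "(\<lambda>t. measure N (Y t)) sums measure N (\<Union>t. Y t)"
    using assms by (intro finite_measure_UNION) auto
  then have "summable (\<lambda>t::nat. c)"
    using assms(4) by (simp add: sums_summable)
  then have "(\<lambda>t::nat. c) \<longlonglongrightarrow> 0"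
    by (rule summable_LIMSEQ_zero)
  then show ?thesis
    by (simp add: LIMSEQ_const_iff)
qed

definition coord_subspace :: "'n set \<Rightarrow> (real^'n) set" where
  "coord_subspace J = {w. \<forall>j\<in>J. w$j = 0}"

lemma coord_subspace_sets: "coord_subspace J \<in> sets borel"
proof -
  have "coord_subspace J = (\<Inter>j\<in>J. {w. w$j = 0})"
    unfolding coord_subspace_def by auto
  moreover have "closed {w::real^'n. w$j = 0}" for j
    by (intro closed_Collect_eq continuous_intros)
  ultimately show ?thesis
    by (auto intro!: borel_closed closed_INT)
qed

lemma measure_uniform_sphere_coord_subspace_tilted:
  fixes \<nu> :: "(real^'n) measure"
  assumes "uniform_sphere \<nu>" "a \<in> J" "l \<notin> J"
  shows "measure \<nu> {w \<in> coord_subspace (J - {a}). w$a = t * w$l} = measure \<nu> (coord_subspace J)"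
proof -
  define c where "c = 1 / sqrt (1 + t\<^sup>2)"
  define s where "s = t * c"
  have "c > 0"
    unfolding c_def by (simp add: add_pos_nonneg)
  have "1 + t\<^sup>2 > 0"
    by (simp add: add_pos_nonneg)
  then have "c\<^sup>2 + s\<^sup>2 = 1"
    unfolding s_def c_def
    by (simp add: power_divide power_mult_distrib) (simp add: add_divide_distrib[symmetric])
  moreover have "a \<noteq> l"
    using assms(2,3) by blast
  ultimately have "orthogonal_transformation (\<lambda>w::real^'n.
      \<chi> i. if i = a then c * w$a - s * w$l else if i = l then s * w$a + c * w$l else w$i)"
    (is "orthogonal_transformation ?rot")
    by (intro orthogonal_transformation_plane_rotation)
  then obtain Q :: "real^'n^'n" where Q: "orthogonal_matrix Q" "\<And>w. Q *v w = ?rot w"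
    by (rule orthogonal_transformation_obtains_matrix) blast
  have "Q *v w \<in> coord_subspace J \<longleftrightarrow> w \<in> coord_subspace (J - {a}) \<and> w$a = t * w$l" for w
  proof -
    have "(Q *v w)$a = c * (w$a - t * w$l)"
      using Q(2) by (simp add: s_def algebra_simps)
    moreover have "(Q *v w)$j = w$j" if "j \<in> J - {a}" for j
      using that assms(3) Q(2) by auto
    moreover have "(\<forall>j\<in>J. P j) \<longleftrightarrow> (\<forall>j\<in>J - {a}. P j) \<and> P a" for P
      using assms(2) by blast
    ultimately show ?thesis
      using \<open>c > 0\<close> unfolding coord_subspace_def by simp
  qed
  then have "{w. Q *v w \<in> coord_subspace J} = {w \<in> coord_subspace (J - {a}). w$a = t * w$l}"
    by blast
  then show ?thesis
    using measure_uniform_sphere_orthogonal[OF assms(1) Q(1) coord_subspace_sets, of J] by (simp only:)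
qed

lemma measure_uniform_sphere_coord_subspace_UNIV:
  fixes \<nu> :: "(real^'n) measure"
  assumes "uniform_sphere \<nu>"
  shows "measure \<nu> (coord_subspace UNIV) = 0"
proof -
  note sph = uniform_sphereD[OF assms]
  have zero: "coord_subspace UNIV = {0}"
    unfolding coord_subspace_def by (simp add: vec_eq_iff set_eq_iff)
  have "AE w in \<nu>. w \<notin> coord_subspace UNIV"
    using sph(4) by eventually_elim (auto simp: zero)
  moreover have "coord_subspace UNIV \<in> sets \<nu>"
    using sph(2) coord_subspace_sets by simp
  ultimately have "coord_subspace UNIV \<in> null_sets \<nu>"
    using AE_iff_null_sets by blast
  then show ?thesis
    by (rule measure_eq_0_null_sets)
qed

text \<open>The tilted sets \<open>{w \<in> coord_subspace (J - {a}). w$a = t * w$l}\<close>, \<open>t = 0, 1, 2, \<dots>\<close>, all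
  have the measure of \<open>coord_subspace J\<close> and pairwise meet only in \<open>coord_subspace (insert l J)\<close>.\<close>
lemma measure_uniform_sphere_coord_subspace_step:
  fixes \<nu> :: "(real^'n) measure"
  assumes sph: "uniform_sphere \<nu>" and "a \<in> J" "l \<notin> J"
    and "measure \<nu> (coord_subspace (insert l J)) = 0"
  shows "measure \<nu> (coord_subspace J) = 0"
proof -
  note sph = uniform_sphereD[OF sph]
  interpret prob_space \<nu>
    by (rule sph(1))
  have null: "coord_subspace (insert l J) \<in> null_sets \<nu>"
    using assms(4) sph(2) by (simp add: null_sets_def emeasure_eq_measure coord_subspace_sets)
  define Y where "Y t = {w \<in> coord_subspace (J - {a}). w$a = real t * w$l} - coord_subspace (insert l J)"
    for t :: nat
  have tilted_sets: "{w \<in> coord_subspace (J - {a}). w$a = real t * w$l} \<in> sets \<nu>" for t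
  proof -
    have "closed {w::real^'n. w$a = real t * w$l}"
      by (intro closed_Collect_eq continuous_intros)
    then have "coord_subspace (J - {a}) \<inter> {w. w$a = real t * w$l} \<in> sets borel"
      by (intro sets.Int coord_subspace_sets borel_closed)
    then show ?thesis
      using sph(2) by (simp add: Collect_conj_eq)
  qed
  have "measure \<nu> (Y t) = measure \<nu> (coord_subspace J)" for t
    unfolding Y_def measure_Diff_null_set[OF tilted_sets null]
    by (rule measure_uniform_sphere_coord_subspace_tilted[OF assms(1-3)])
  moreover have "disjoint_family Y"
    unfolding disjoint_family_on_def
  proof (intro ballI impI equals0I)
    fix t t' :: nat and w
    assume "t \<noteq> t'" and "w \<in> Y t \<inter> Y t'"
    then have w: "w \<in> coord_subspace (J - {a})" "w \<notin> coord_subspace (insert l J)"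
      "w$a = real t * w$l" "w$a = real t' * w$l"
      unfolding Y_def by auto
    then have "real t * w$l = real t' * w$l"
      by linarith
    then have "w$l = 0"
      using \<open>t \<noteq> t'\<close> by simp
    then have "w \<in> coord_subspace (insert l J)"
      using w(1,3) unfolding coord_subspace_def by auto
    then show False
      using w(2) by blast
  qed
  moreover have "Y t \<in> sets \<nu>" for t
    unfolding Y_def using tilted_sets null by auto
  ultimately show ?thesis
    using disjoint_family_const_measure_eq_0[OF finite_measure_axioms] by blast
qed

lemma measure_uniform_sphere_coord_subspace:
  fixes \<nu> :: "(real^'n) measure"
  assumes sph: "uniform_sphere \<nu>" and "J \<noteq> {}"
  shows "measure \<nu> (coord_subspace J) = 0"
  using \<open>J \<noteq> {}\<close>
proof (induction "card (UNIV - J)" arbitrary: J)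
  case 0
  then have "J = UNIV"
    by (metis Diff_eq_empty_iff card_0_eq finite top.extremum_uniqueI)
  then show ?case
    using measure_uniform_sphere_coord_subspace_UNIV[OF sph] by simp
next
  case (Suc n)
  then obtain l a where "l \<notin> J" "a \<in> J"
    by (metis Diff_iff card.empty equals0I nat.distinct(1))
  have "card (UNIV - insert l J) = card ((UNIV - J) - {l})"
    by (metis Diff_insert)
  also have "\<dots> = n"
    using \<open>l \<notin> J\<close> Suc.hyps(2) by (simp add: card_Diff_singleton)
  finally have "measure \<nu> (coord_subspace (insert l J)) = 0"
    using Suc.hyps(1) by blast
  then show ?case
    by (rule measure_uniform_sphere_coord_subspace_step[OF sph \<open>a \<in> J\<close> \<open>l \<notin> J\<close>])
qed

lemma AE_uniform_sphere_coord_neq: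
  fixes \<nu> :: "(real^'n) measure"
  assumes "uniform_sphere \<nu>" "a \<noteq> b"
  shows "AE w in \<nu>. w$a \<noteq> w$b"
proof -
  note sph = uniform_sphereD[OF assms(1)]
  interpret prob_space \<nu>
    by (rule sph(1))
  have "measure \<nu> {w \<in> coord_subspace ({a} - {a}). w$a = 1 * w$b} = 0"
    using measure_uniform_sphere_coord_subspace_tilted[OF assms(1), of a "{a}" b 1] assms(2)
      measure_uniform_sphere_coord_subspace[OF assms(1), of "{a}"] by simp
  then have "measure \<nu> {w. w$a = w$b} = 0"
    by (simp add: coord_subspace_def)
  moreover have "{w::real^'n. w$a = w$b} \<in> sets \<nu>"
    unfolding sph(2) by (intro borel_closed closed_Collect_eq continuous_intros)
  ultimately have "{w. w$a = w$b} \<in> null_sets \<nu>"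
    by (simp add: null_sets_def emeasure_eq_measure)
  then show ?thesis
    by (rule AE_I') auto
qed

lemma AE_uniform_sphere_inj_on:
  fixes \<nu> :: "(real^'n) measure"
    and \<sigma> :: "nat \<Rightarrow> 'n"
  assumes "uniform_sphere \<nu>" "inj_on \<sigma> {..<M}"
  shows "AE w in \<nu>. inj_on (\<lambda>j. w $ \<sigma> j) {..<M}"
proof -
  have "AE w in \<nu>. \<forall>i\<in>{..<M}. \<forall>j\<in>{..<M}. i \<noteq> j \<longrightarrow> w $ \<sigma> i \<noteq> w $ \<sigma> j"
  proof (intro AE_finite_allI finite_lessThan)
    fix i j assume "i \<in> {..<M}" "j \<in> {..<M}"
    then have "i \<noteq> j \<longrightarrow> \<sigma> i \<noteq> \<sigma> j"
      using assms(2) by (auto dest: inj_onD)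
    then show "AE w in \<nu>. i \<noteq> j \<longrightarrow> w $ \<sigma> i \<noteq> w $ \<sigma> j"
      using AE_uniform_sphere_coord_neq[OF assms(1)] by (cases "i = j") auto
  qed
  then show ?thesis
    by eventually_elim (auto intro: inj_onI)
qed

lemma integral_uniform_sphere_coord:
  fixes \<nu> :: "(real^'n) measure"
  assumes "uniform_sphere \<nu>"
  shows "integrable \<nu> (\<lambda>w. w$j)" "(\<integral>w. w$j \<partial>\<nu>) = 0"
proof -
  note sph = uniform_sphereD[OF assms]
  interpret prob_space \<nu>
    by (rule sph(1))
  have meas: "(\<lambda>w::real^'n. w$j) \<in> borel_measurable borel"
    by (intro borel_measurable_continuous_onI continuous_intros)
  show "integrable \<nu> (\<lambda>w. w$j)"
  proof (rule integrable_const_bound[where B=1])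
    show "AE w in \<nu>. norm (w$j) \<le> 1"
      using sph(4) by eventually_elim (metis component_le_norm_cart real_norm_def)
    show "(\<lambda>w. w$j) \<in> borel_measurable \<nu>"
      unfolding measurable_cong_sets[OF sph(2) refl] by (rule meas)
  qed
  have "orthogonal_transformation (\<lambda>x::real^'n. - x)"
    by (simp add: orthogonal_transformation_neg)
  then obtain Q :: "real^'n^'n" where "orthogonal_matrix Q" "\<And>x. Q *v x = - x"
    by (rule orthogonal_transformation_obtains_matrix) blast
  then have "(\<integral>w. - (w$j) \<partial>\<nu>) = (\<integral>w. w$j \<partial>\<nu>)"
    using integral_uniform_sphere_orthogonal[OF assms _ meas, of Q] by simp
  then show "(\<integral>w. w$j \<partial>\<nu>) = 0"
    by simp
qed

lemma sets_top_ranked: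
  assumes "\<And>j. (\<lambda>x. f x j) \<in> borel_measurable N"
  shows "{x \<in> space N. m \<in> top_ranked k M (f x)} \<in> sets N"
proof -
  have "real (num_greater M (f x) m) = (\<Sum>j<M. if f x m < f x j then 1 else 0)" for x
    unfolding num_greater_def by (simp add: sum.If_cases Collect_conj_eq lessThan_def)
  moreover have "(\<lambda>x. \<Sum>j<M. if f x m < f x j then 1 else 0 :: real) \<in> borel_measurable N"
    using assms by (intro borel_measurable_sum measurable_If borel_measurable_less) auto
  ultimately have meas: "(\<lambda>x. real (num_greater M (f x) m)) \<in> borel_measurable N"
    by simp
  have "{x \<in> space N. real (num_greater M (f x) m) < real k} \<in> sets N"
    using borel_measurable_less[OF meas, of "\<lambda>_. real k"] by (simp del: of_nat_less_iff)
  then show ?thesis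
    unfolding top_ranked_def by (cases "m < M") simp_all
qed

lemma borel_measurable_kclosest_weight:
  assumes "\<And>j. (\<lambda>x. f x j) \<in> borel_measurable N"
  shows "(\<lambda>x. kclosest_weight \<epsilon> k M (m \<in> top_ranked k M (f x))) \<in> borel_measurable N"
  unfolding kclosest_weight_def
  by (intro borel_measurable_divide measurable_If sets_top_ranked[OF assms]) auto

lemma borel_measurable_kclosest_estimate:
  fixes S :: "nat \<Rightarrow> real^'n"
  shows "(\<lambda>A::real^'n^'n. kclosest_estimate \<epsilon> k M (\<lambda>j. r *\<^sub>R (A *v S j)) v) \<in> borel_measurable borel"
  unfolding kclosest_estimate_eq_weights
  by (intro borel_measurable_sum borel_measurable_scaleR borel_measurable_kclosest_weight
      borel_measurable_uminus borel_measurable_power measurable_compose[OF _ borel_measurable_norm]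
      borel_measurable_diff borel_measurable_const borel_measurable_matrix_vector_mul_left)

lemma borel_measurable_kclosest_projection:
  "kclosest_projection \<epsilon> k M \<sigma> \<in> borel_measurable borel"
  unfolding kclosest_projection_def[abs_def]
  by (intro borel_measurable_sum borel_measurable_times borel_measurable_kclosest_weight
      borel_measurable_inner borel_measurable_continuous_onI continuous_intros)

lemma borel_measurable_topk_sum:
  "(\<lambda>w::real^'n. topk_sum k M (\<lambda>j. w $ \<sigma> j)) \<in> borel_measurable borel"
proof -
  have "finite {S. S \<subseteq> {..<M} \<and> card S = k}"
    by (rule finite_subset[of _ "Pow {..<M}"]) auto
  then have "(\<lambda>w::real^'n. Max {(\<lambda>S w. \<Sum>j\<in>S. w $ \<sigma> j) S w | S. S \<in> {S. S \<subseteq> {..<M} \<and> card S = k}})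
      \<in> borel_measurable borel"
    by (intro borel_measurable_Max2 borel_measurable_sum borel_measurable_continuous_onI continuous_intros)
  then show ?thesis
    unfolding topk_sum_def by simp
qed

lemma integrable_topk_sum:
  fixes \<nu> :: "(real^'n) measure"
  assumes sph: "uniform_sphere \<nu>" and inj: "inj_on \<sigma> {..<M}" and "k \<le> M"
  shows "integrable \<nu> (\<lambda>w. topk_sum k M (\<lambda>j. w $ \<sigma> j))"
proof -
  note \<nu> = uniform_sphereD[OF sph]
  interpret prob_space \<nu>
    by (rule \<nu>(1))
  have bound: "\<bar>topk_sum k M (\<lambda>j. w $ \<sigma> j)\<bar> \<le> real M"
    if "norm w = 1" "inj_on (\<lambda>j. w $ \<sigma> j) {..<M}" for w
  proof -
    let ?T = "top_ranked k M (\<lambda>j. w $ \<sigma> j)"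
    have "\<bar>sum (\<lambda>j. w $ \<sigma> j) ?T\<bar> \<le> sum (\<lambda>j. 1) ?T"
      using \<open>norm w = 1\<close> component_le_norm_cart[of w]
      by (intro order_trans[OF sum_abs] sum_mono) auto
    then show ?thesis
      using topk_sum_eq_sum_top_ranked[OF that(2) \<open>k \<le> M\<close>] card_top_ranked[OF that(2) \<open>k \<le> M\<close>] \<open>k \<le> M\<close>
      by simp
  qed
  have "AE w in \<nu>. norm (topk_sum k M (\<lambda>j. w $ \<sigma> j)) \<le> real M"
    using \<nu>(4) AE_uniform_sphere_inj_on[OF sph inj] by eventually_elim (simp add: bound)
  then show ?thesis
    by (intro integrable_const_bound[where B="real M"])
      (simp_all add: measurable_cong_sets[OF \<nu>(2) refl] borel_measurable_topk_sum)
qed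

section \<open>Expectation of the estimate\<close>

text \<open>The reflection in \<open>u\<^sup>\<bottom>\<close> fixes \<open>v\<close> and flips the \<open>u\<close>-component of the estimate; by left
  invariance of the Haar measure the integral is therefore its own negative.\<close>
lemma integral_inner_kclosest_estimate_orthogonal:
  fixes \<mu> :: "(real^'n^'n) measure" and S :: "nat \<Rightarrow> real^'n"
  assumes haar: "haar_orthogonal \<mu>" and "norm u = 1" "inner u v = 0"
  shows "(\<integral>A. inner u (kclosest_estimate \<epsilon> k M (\<lambda>j. r *\<^sub>R (A *v S j)) v) \<partial>\<mu>) = 0"
proof -
  let ?est = "\<lambda>A. kclosest_estimate \<epsilon> k M (\<lambda>j. r *\<^sub>R (A *v S j)) v"
  obtain Q :: "real^'n^'n" where Q: "orthogonal_matrix Q" "\<And>x. Q *v x = x - (2 * inner u x) *\<^sub>R u"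
    using orthogonal_transformation_reflection[OF \<open>norm u = 1\<close>]
    by (rule orthogonal_transformation_obtains_matrix) blast
  have "inner u u = 1"
    using \<open>norm u = 1\<close> by (simp add: norm_eq_1)
  then have flip: "inner u (Q *v x) = - inner u x" for x
    using Q(2) by (simp add: inner_diff_right)
  have "Q *v v = v"
    using Q(2) \<open>inner u v = 0\<close> by simp
  then have "?est (Q ** A) = Q *v ?est A" for A
    using kclosest_estimate_orthogonal[OF Q(1), of \<epsilon> k M "\<lambda>j. r *\<^sub>R (A *v S j)" v]
    by (simp add: matrix_vector_mul_assoc[symmetric] matrix_vector_mult_scaleR)
  then have "(\<integral>A. inner u (?est (Q ** A)) \<partial>\<mu>) = - (\<integral>A. inner u (?est A) \<partial>\<mu>)"
    by (simp add: flip)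
  moreover have "(\<integral>A. inner u (?est (Q ** A)) \<partial>\<mu>) = (\<integral>A. inner u (?est A) \<partial>\<mu>)"
    by (intro integral_haar_orthogonal_left[OF haar Q(1)] borel_measurable_inner
        borel_measurable_const borel_measurable_kclosest_estimate)
  ultimately show ?thesis
    by simp
qed

lemma integral_kclosest_projection:
  fixes \<nu> :: "(real^'n) measure"
  assumes sph: "uniform_sphere \<nu>" and inj: "inj_on \<sigma> {..<M}" and "0 < M" "k \<le> M"
  shows "integral\<^sup>L \<nu> (kclosest_projection \<epsilon> k M \<sigma>) =
    (exp \<epsilon> - 1) / ((real k * exp \<epsilon> + real M - real k) * sqrt ((real M - 1) / real M))
      * (\<integral>w. topk_sum k M (\<lambda>j. w $ \<sigma> j) \<partial>\<nu>)"
proof -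
  note \<nu> = uniform_sphereD[OF sph]
  define c where "c = (exp \<epsilon> - 1) / ((real k * exp \<epsilon> + real M - real k) * sqrt (real M * (real M - 1)))"
  have coord: "integrable \<nu> (\<lambda>w. w $ j)" "(\<integral>w. w $ j \<partial>\<nu>) = 0" for j
    using integral_uniform_sphere_coord[OF sph] by auto
  have "integral\<^sup>L \<nu> (kclosest_projection \<epsilon> k M \<sigma>)
      = (\<integral>w. c * (real M * topk_sum k M (\<lambda>j. w $ \<sigma> j) - real k * (\<Sum>l<M. w $ \<sigma> l)) \<partial>\<nu>)"
  proof (rule integral_cong_AE)
    show "kclosest_projection \<epsilon> k M \<sigma> \<in> borel_measurable \<nu>"
      unfolding measurable_cong_sets[OF \<nu>(2) refl] by (rule borel_measurable_kclosest_projection)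
    show "(\<lambda>w. c * (real M * topk_sum k M (\<lambda>j. w $ \<sigma> j) - real k * (\<Sum>l<M. w $ \<sigma> l))) \<in> borel_measurable \<nu>"
      unfolding measurable_cong_sets[OF \<nu>(2) refl]
      by (intro borel_measurable_times borel_measurable_diff borel_measurable_const borel_measurable_topk_sum
          borel_measurable_sum borel_measurable_continuous_onI continuous_intros)
    show "AE w in \<nu>. kclosest_projection \<epsilon> k M \<sigma> w
        = c * (real M * topk_sum k M (\<lambda>j. w $ \<sigma> j) - real k * (\<Sum>l<M. w $ \<sigma> l))"
      using AE_uniform_sphere_inj_on[OF sph inj]
      by eventually_elim (simp add: kclosest_projection_eq[OF inj _ \<open>k \<le> M\<close>] c_def)
  qed
  also have "\<dots> = c * (real M * (\<integral>w. topk_sum k M (\<lambda>j. w $ \<sigma> j) \<partial>\<nu>))"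
    using integrable_topk_sum[OF sph inj \<open>k \<le> M\<close>] coord by (simp add: integral_sum)
  finally show ?thesis
    unfolding c_def sqrt_mult_pred_eq[OF \<open>0 < M\<close>] using \<open>0 < M\<close> by simp
qed

lemma integral_kclosest_estimate_simplex:
  fixes \<mu> :: "(real^'n^'n) measure" and \<nu> :: "(real^'n) measure"
  assumes haar: "haar_orthogonal \<mu>" and sph: "uniform_sphere \<nu>" and inj: "inj_on \<sigma> {..<M}"
    and M: "2 \<le> M" and "0 \<le> \<epsilon>" "1 \<le> k" "k \<le> M" and "0 < r" and v: "norm v = 1"
  shows "(\<integral>A. kclosest_estimate \<epsilon> k M (\<lambda>j. r *\<^sub>R (A *v simplex_vec M \<sigma> j)) v \<partial>\<mu>) =
    (r * ((exp \<epsilon> - 1) / ((real k * exp \<epsilon> + real M - real k) * sqrt ((real M - 1) / real M))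
      * (\<integral>w. topk_sum k M (\<lambda>j. w $ \<sigma> j) \<partial>\<nu>))) *\<^sub>R v"
proof -
  note \<mu> = haar_orthogonalD[OF haar]
  let ?est = "\<lambda>A. kclosest_estimate \<epsilon> k M (\<lambda>j. r *\<^sub>R (A *v simplex_vec M \<sigma> j)) v"
  have est_meas: "?est \<in> borel_measurable \<mu>"
    unfolding measurable_cong_sets[OF \<mu>(2) refl] by (rule borel_measurable_kclosest_estimate)
  interpret prob_space \<mu>
    by (rule \<mu>(1))
  have bound: "norm (?est A) \<le> real M * r" if "orthogonal_matrix A" for A
    using \<open>0 < r\<close> orthogonal_matrix_norm[OF that] norm_simplex_vec[OF inj _ M]
    by (intro norm_kclosest_estimate_le[OF \<open>0 \<le> \<epsilon>\<close> \<open>1 \<le> k\<close> \<open>k \<le> M\<close>]) simp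
  have "AE A in \<mu>. norm (?est A) \<le> real M * r"
    using \<mu>(4) by eventually_elim (rule bound)
  then have "integrable \<mu> ?est"
    using est_meas by (rule integrable_const_bound)
  then have inner_integral: "inner u (integral\<^sup>L \<mu> ?est) = (\<integral>A. inner u (?est A) \<partial>\<mu>)" for u
    by (simp add: integral_inner_right)
  have "(\<integral>A. inner v (?est A) \<partial>\<mu>) = (\<integral>A. r * kclosest_projection \<epsilon> k M \<sigma> (v v* A) \<partial>\<mu>)"
  proof (rule integral_cong_AE)
    show "(\<lambda>A. inner v (?est A)) \<in> borel_measurable \<mu>"
      using est_meas by (intro borel_measurable_inner) auto
    show "(\<lambda>A. r * kclosest_projection \<epsilon> k M \<sigma> (v v* A)) \<in> borel_measurable \<mu>"
      unfolding measurable_cong_sets[OF \<mu>(2) refl]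
      by (intro borel_measurable_times borel_measurable_const
          measurable_compose[OF borel_measurable_vector_matrix_mul borel_measurable_kclosest_projection])
    show "AE A in \<mu>. inner v (?est A) = r * kclosest_projection \<epsilon> k M \<sigma> (v v* A)"
      using \<mu>(4) by eventually_elim (rule inner_kclosest_estimate_simplex[OF _ v \<open>0 < r\<close> inj M])
  qed
  also have "\<dots> = r * integral\<^sup>L \<nu> (kclosest_projection \<epsilon> k M \<sigma>)"
    using integral_haar_row[OF haar sph borel_measurable_kclosest_projection
        kclosest_projection_bound[OF inj M \<open>0 \<le> \<epsilon>\<close> \<open>1 \<le> k\<close> \<open>k \<le> M\<close>] v] by simp
  finally have "inner v (integral\<^sup>L \<mu> ?est) = r * ((exp \<epsilon> - 1) / ((real k * exp \<epsilon> + real M - real k)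
      * sqrt ((real M - 1) / real M)) * (\<integral>w. topk_sum k M (\<lambda>j. w $ \<sigma> j) \<partial>\<nu>))"
    using M integral_kclosest_projection[OF sph inj _ \<open>k \<le> M\<close>] by (simp add: inner_integral)
  moreover have "inner u (integral\<^sup>L \<mu> ?est) = 0" if "norm u = 1" "inner u v = 0" for u
    using integral_inner_kclosest_estimate_orthogonal[OF haar that] by (simp add: inner_integral)
  ultimately show ?thesis
    using eq_scaleR_if_orthogonal_inner_zero[OF v, of "integral\<^sup>L \<mu> ?est"] by simp
qed

theorem lemma5:
  fixes \<mu> :: "(real^'n^'n) measure" and \<nu> :: "(real^'n) measure"
    and \<sigma> :: "nat \<Rightarrow> 'n" and d b M k :: nat and \<epsilon> :: real
  assumes "CARD('n) = d" and "b \<ge> 1" and "M = 2 ^ b" and "M < d"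
    and "\<epsilon> > 0" and "1 \<le> k" and "k \<le> M"
    and "inj_on \<sigma> {..<M}"
    and "haar_orthogonal \<mu>" and "uniform_sphere \<nu>"
  shows "\<forall>r>0. kclosest_unbiased \<epsilon> k M \<mu> (\<lambda>A m. r *\<^sub>R (A *v simplex_vec M \<sigma> m))
           \<longleftrightarrow> r = (real k * exp \<epsilon> + real M - real k) / (exp \<epsilon> - 1)
                   * sqrt ((real M - 1) / real M)
                   * (1 / integral\<^sup>L \<nu> (\<lambda>a. topk_sum k M (\<lambda>j. a $ \<sigma> j)))"
proof (intro allI impI)
  fix r :: real
  assume "0 < r"
  define D where "D = real k * exp \<epsilon> + real M - real k"
  define s where "s = sqrt ((real M - 1) / real M)"
  define C where "C = integral\<^sup>L \<nu> (\<lambda>a. topk_sum k M (\<lambda>j. a $ \<sigma> j))"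
  have "2 \<le> M"
    using \<open>M = 2 ^ b\<close> \<open>b \<ge> 1\<close> self_le_power[of 2 b] by simp
  have "1 < exp \<epsilon>" "0 < s" "exp \<epsilon> \<le> D"
    using \<open>\<epsilon> > 0\<close> \<open>2 \<le> M\<close> exp_le_kclosest_normalizer[OF _ \<open>1 \<le> k\<close> \<open>k \<le> M\<close>, of \<epsilon>]
    by (simp_all add: s_def D_def)
  have "kclosest_unbiased \<epsilon> k M \<mu> (\<lambda>A m. r *\<^sub>R (A *v simplex_vec M \<sigma> m))
      \<longleftrightarrow> (\<forall>v::real^'n. norm v = 1 \<longrightarrow> (r * ((exp \<epsilon> - 1) / (D * s) * C)) *\<^sub>R v = v)"
    unfolding kclosest_unbiased_iff D_def s_def C_def
    using integral_kclosest_estimate_simplex[OF assms(9,10,8) \<open>2 \<le> M\<close> _ assms(6,7) \<open>0 < r\<close>] assms(5)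
    by simp
  also have "\<dots> \<longleftrightarrow> r * ((exp \<epsilon> - 1) / (D * s) * C) = 1"
    by (rule scaleR_eq_self_on_sphere_iff)
  also have "\<dots> \<longleftrightarrow> r = D / (exp \<epsilon> - 1) * s * (1 / C)"
  proof -
    have "r * (e / (D * s) * C) = 1 \<longleftrightarrow> r = D / e * s * (1 / C)" if "0 < e" for e
      using that \<open>0 < r\<close> \<open>0 < s\<close> \<open>1 < exp \<epsilon>\<close> \<open>exp \<epsilon> \<le> D\<close>
      by (cases "C = 0") (auto simp: field_simps)
    then show ?thesis
      using \<open>1 < exp \<epsilon>\<close> by simp
  qed
  finally show "kclosest_unbiased \<epsilon> k M \<mu> (\<lambda>A m. r *\<^sub>R (A *v simplex_vec M \<sigma> m))
      \<longleftrightarrow> r = D / (exp \<epsilon> - 1) * s * (1 / C)" .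
qed

end
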